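(* Let $R$ be a set, $\mathcal{G}:(\mathbf{1},R)\rightarrow(Y,R)$ an object of $\mathrm{2Open}_R$, and $\mathcal{H}$ an $F_\mathcal{G}$-coalgebra with coalgebra map $(\langle\mathrm{now}_\mathcal{H},\mathrm{ltr}_\mathcal{H}\rangle,\langle\mathrm{hd}_\mathcal{H},\mathrm{tl}_\mathcal{H}\rangle):\mathcal{H}\rightarrow F_\mathcal{G}\mathcal{H}$, and let $\mathrm{unf}_Y:Y_\mathcal{H}\rightarrow Y^\omega$ be the unique function with $\mathrm{unf}_Y(z)=\mathrm{hd}_\mathcal{H}(z)\mathrel{::}\mathrm{unf}_Y(\mathrm{tl}_\mathcal{H}(z))$. Let $k:Y^\omega\rightarrow R$ and $\sigma'\in\Sigma_\mathcal{H}$ with $\sigma'\in E_\mathcal{H}(k\circ\mathrm{unf}_Y)$. Then (i) $\mathrm{now}_\mathcal{H}(\sigma')\in E_\mathcal{G}\big(\lambda y.\,k(y\mathrel{::}\mathrm{unf}_Y(P_\mathcal{H}(\mathrm{ltr}_\mathcal{H}(\sigma')(y))))\big)$, and (ii) for all $y'\in Y$, $\mathrm{ltr}_\mathcal{H}(\sigma')(y')\in E_\mathcal{H}\big(\lambda z.\,k(y'\mathrel{::}\mathrm{unf}_Y(z))\big)$.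
   Context: Fix a set $R$. Objects of $\mathrm{2Open}_R$ are open games $\mathcal{H}:(\mathbf{1},R)\rightarrow(Y_\mathcal{H},R)$ given by a strategy set $\Sigma_\mathcal{H}$, a move set $Y_\mathcal{H}$, a play function $P_\mathcal{H}:\Sigma_\mathcal{H}\rightarrow Y_\mathcal{H}$, an equilibrium function $E_\mathcal{H}:(Y_\mathcal{H}\rightarrow R)\rightarrow\mathcal{P}\Sigma_\mathcal{H}$, and identity coutility $C\,\sigma\,r=r$. A morphism $\beta:\mathcal{H}\rightarrow\mathcal{H}'$ is a pair $\beta_Y:Y_\mathcal{H}\rightarrow Y_{\mathcal{H}'}$, $\beta_\Sigma:\Sigma_\mathcal{H}\rightarrow\Sigma_{\mathcal{H}'}$ with $\beta_Y(P_\mathcal{H}\sigma)=P_{\mathcal{H}'}(\beta_\Sigma\sigma)$ for all $\sigma$, and such that for all $\sigma\in\Sigma_\mathcal{H}$ and $k:Y_{\mathcal{H}'}\rightarrow R$, $\sigma\in E_\mathcal{H}(k\circ\beta_Y)$ implies $\beta_\Sigma(\sigma)\in E_{\mathcal{H}'}(k)$. For the fixed $\mathcal{G}$ (data $\Sigma_\mathcal{G},Y,P_\mathcal{G},E_\mathcal{G}$) and any object $\mathcal{H}$, $F_\mathcal{G}\mathcal{H}$ is the game with strategies $\Sigma_\mathcal{G}\times(Y\rightarrow\Sigma_\mathcal{H})$, moves $Y\times Y_\mathcal{H}$, play $P(\sigma,f)=(P_\mathcal{G}\sigma,P_\mathcal{H}(f(P_\mathcal{G}\sigma)))$, identity coutility,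 and $(\sigma,f)\in E_{F_\mathcal{G}\mathcal{H}}(k)$ iff $\sigma\in E_\mathcal{G}(\lambda y.\,k(y,P_\mathcal{H}(f\,y)))$ and $f(y')\in E_\mathcal{H}(\lambda z.\,k(y',z))$ for all $y'\in Y$. An $F_\mathcal{G}$-coalgebra is an object $\mathcal{H}$ with a morphism $\mathcal{H}\rightarrow F_\mathcal{G}\mathcal{H}$; its strategy component is written $\langle\mathrm{now}_\mathcal{H},\mathrm{ltr}_\mathcal{H}\rangle:\Sigma_\mathcal{H}\rightarrow\Sigma_\mathcal{G}\times(Y\rightarrow\Sigma_\mathcal{H})$ and its move component $\langle\mathrm{hd}_\mathcal{H},\mathrm{tl}_\mathcal{H}\rangle:Y_\mathcal{H}\rightarrow Y\times Y_\mathcal{H}$. $Y^\omega$ denotes the set of infinite streams over $Y$ and $y\mathrel{::}w$ prepending $y$ to a stream. *)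

theory Defs
  imports Main "HOL-Library.Stream"
begin

text \<open>Objects of 2Open_R: a game (1,R) -> (Y,R) with identity coutility is given by
  its play function P :: 'sigma => 'y and equilibrium function E :: ('y => 'r) => 'sigma set;
  the strategy set and move set are the types 'sigma and 'y.\<close>

definition FG_play ::
  "('sg \<Rightarrow> 'y) \<Rightarrow> ('sh \<Rightarrow> 'yh) \<Rightarrow> ('sg \<times> ('y \<Rightarrow> 'sh)) \<Rightarrow> 'y \<times> 'yh" where
  "FG_play PG PH = (\<lambda>(\<sigma>, f). (PG \<sigma>, PH (f (PG \<sigma>))))"

definition FG_eq ::
  "('sg \<Rightarrow> 'y) \<Rightarrow> (('y \<Rightarrow> 'r) \<Rightarrow> 'sg set) \<Rightarrow> ('sh \<Rightarrow> 'yh) \<Rightarrow> (('yh \<Rightarrow> 'r) \<Rightarrow> 'sh set)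
    \<Rightarrow> ('y \<times> 'yh \<Rightarrow> 'r) \<Rightarrow> ('sg \<times> ('y \<Rightarrow> 'sh)) set" where
  "FG_eq PG EG PH EH k = {(\<sigma>, f).
      \<sigma> \<in> EG (\<lambda>y. k (y, PH (f y))) \<and> (\<forall>y'. f y' \<in> EH (\<lambda>z. k (y', z)))}"

definition is_2open_morphism ::
  "('s1 \<Rightarrow> 'y1) \<Rightarrow> (('y1 \<Rightarrow> 'r) \<Rightarrow> 's1 set) \<Rightarrow> ('s2 \<Rightarrow> 'y2) \<Rightarrow> (('y2 \<Rightarrow> 'r) \<Rightarrow> 's2 set)
    \<Rightarrow> ('y1 \<Rightarrow> 'y2) \<Rightarrow> ('s1 \<Rightarrow> 's2) \<Rightarrow> bool" where
  "is_2open_morphism P1 E1 P2 E2 bY bS \<longleftrightarrow>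
     (\<forall>\<sigma>. bY (P1 \<sigma>) = P2 (bS \<sigma>)) \<and>
     (\<forall>\<sigma> k. \<sigma> \<in> E1 (k \<circ> bY) \<longrightarrow> bS \<sigma> \<in> E2 k)"

end

theory Submission
  imports Defs
begin

text \<open>Since unf z = hdH z ## unf (tlH z), the context k \<circ> unf factors through the coalgebra
  map on moves as the context (y, z) \<mapsto> k (y ## unf z) of F_G H.  The strategy component of the
  coalgebra map therefore carries \<sigma>' into an equilibrium of F_G H in that context, and the
  two conditions in the definition of that equilibrium are exactly (i) and (ii).\<close>

lemma is_2open_morphism_eq_factor:
  assumes "is_2open_morphism P1 E1 P2 E2 bY bS"
    and "\<sigma> \<in> E1 k"
    and "k = k' \<circ> bY"
  shows "bS \<sigma> \<in> E2 k'"
  using assms unfolding is_2open_morphism_def by blast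

lemma stream_context_factor:
  assumes "\<And>z. unf z = hdH z ## unf (tlH z)"
  shows "k \<circ> unf = (\<lambda>(y, z). k (y ## unf z)) \<circ> (\<lambda>z. (hdH z, tlH z))"
  by (simp add: fun_eq_iff assms[symmetric])

theorem lemma14:
  fixes PG :: "'sg \<Rightarrow> 'y" and EG :: "('y \<Rightarrow> 'r) \<Rightarrow> 'sg set"
    and PH :: "'sh \<Rightarrow> 'yh" and EH :: "('yh \<Rightarrow> 'r) \<Rightarrow> 'sh set"
    and now :: "'sh \<Rightarrow> 'sg" and ltr :: "'sh \<Rightarrow> 'y \<Rightarrow> 'sh"
    and hdH :: "'yh \<Rightarrow> 'y" and tlH :: "'yh \<Rightarrow> 'yh"
    and unf :: "'yh \<Rightarrow> 'y stream"
    and k :: "'y stream \<Rightarrow> 'r" and \<sigma>' :: 'sh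
  assumes coalg: "is_2open_morphism PH EH (FG_play PG PH) (FG_eq PG EG PH EH)
                    (\<lambda>z. (hdH z, tlH z)) (\<lambda>\<sigma>. (now \<sigma>, ltr \<sigma>))"
    and unf_eq: "\<And>z. unf z = hdH z ## unf (tlH z)"
    and eq: "\<sigma>' \<in> EH (k \<circ> unf)"
  shows "now \<sigma>' \<in> EG (\<lambda>y. k (y ## unf (PH (ltr \<sigma>' y))))
         \<and> (\<forall>y'. ltr \<sigma>' y' \<in> EH (\<lambda>z. k (y' ## unf z)))"
proof -
  have "(now \<sigma>', ltr \<sigma>') \<in> FG_eq PG EG PH EH (\<lambda>(y, z). k (y ## unf z))"
    using is_2open_morphism_eq_factor[OF coalg eq stream_context_factor[where unf = unf, OF unf_eq]] by simp
  then show ?thesis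
    by (simp add: FG_eq_def)
qed

end
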